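(* Let $P$ and $Q$ be probability distributions on a countable password space $\mathcal{PW}$ (discrete case) such that $Q(pw)>0$ whenever $P(pw)>0$, and let $k\ge 2$. Define $G(x)=\Pr_{pw\gets Q}\!\left[\frac{P(pw)}{Q(pw)}\le x\right]$ and $G(x^-)=\Pr_{pw\gets Q}\!\left[\frac{P(pw)}{Q(pw)}< x\right]$. Then the flatness satisfies $$\epsilon(1)=\sum_{x}\frac{1}{k}\,x\left[G^{k}(x)-G^{k}(x^-)\right],$$ where the sum ranges over the values $x$ taken by $P(pw)/Q(pw)$ for $pw$ with $Q(pw)>0$.
   Context: The flatness game $FlatGame^{P,Q,k}_{\mathcal{A}}(n)$: sample a password $pw\gets P$ and $k-1$ honeywords independently from $Q$; form the list of these $k$ words and shuffle it uniformly at random. The attacker $\mathcal{A}$ (any probabilistic Turing machine, which may know $P$ and $Q$) receives the shuffled list and outputs $n$ guesses (positions in the list); it wins if the position holding $pw$ is among its guesses. $\epsilon(1)=\max_{\mathcal{A}}\Pr[FlatGame^{P,Q,k}_{\mathcal{A}}(1)=1]$ is the flatness. *)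

theory Defs
  imports "HOL-Probability.Probability" "HOL-Combinatorics.Permutations"
begin

text \<open>The true password pw is drawn from P,
  k-1 honeywords are drawn i.i.d. from Q, the list pw # honeywords is shuffled by a
  uniformly random permutation sigma of the positions {0..<k} (position j of the shuffled
  list holds the entry sigma j of the original list), so the true password sits at position
  inv sigma 0.  The attacker is an arbitrary randomized map from the shuffled list to a list
  of guesses (positions).\<close>

definition FlatGame :: "'a pmf \<Rightarrow> 'a pmf \<Rightarrow> nat \<Rightarrow> ('a list \<Rightarrow> nat list pmf) \<Rightarrow> bool pmf" where
  "FlatGame P Q k A = do {
     pw \<leftarrow> P;
     hs \<leftarrow> replicate_pmf (k - 1) Q;
     \<sigma> \<leftarrow> pmf_of_set {\<sigma>. \<sigma> permutes {..<k}};
     guesses \<leftarrow> A (map (\<lambda>j. (pw # hs) ! \<sigma> j) [0..<k]);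
     return_pmf (inv \<sigma> 0 \<in> set guesses)
   }"

definition valid_attacker :: "nat \<Rightarrow> ('a list \<Rightarrow> nat list pmf) \<Rightarrow> bool" where
  "valid_attacker n A \<longleftrightarrow> (\<forall>L. \<forall>g \<in> set_pmf (A L). length g = n)"

definition flatness :: "'a pmf \<Rightarrow> 'a pmf \<Rightarrow> nat \<Rightarrow> nat \<Rightarrow> real" where
  "flatness P Q k n = (SUP A \<in> {A. valid_attacker n A}. pmf (FlatGame P Q k A) True)"

definition G_le :: "'a pmf \<Rightarrow> 'a pmf \<Rightarrow> real \<Rightarrow> real" where
  "G_le P Q x = measure_pmf.prob Q {pw. pmf P pw / pmf Q pw \<le> x}"

definition G_less :: "'a pmf \<Rightarrow> 'a pmf \<Rightarrow> real \<Rightarrow> real" where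
  "G_less P Q x = measure_pmf.prob Q {pw. pmf P pw / pmf Q pw < x}"

end

theory Submission
  imports Defs
begin

(* Write r = P/Q for the likelihood ratio.  Given the shuffle sigma, the list shown to the
   attacker has density r (L ! inv sigma 0) with respect to k independent draws from Q, since
   the product Q^k is invariant under permuting positions; and the position inv sigma 0 of the
   true password is uniform on {..<k}.  Hence an attacker guessing position i with probability
   a_i(L) wins with probability (1/k) E_{L ~ Q^k} [sum_i r (L ! i) * a_i(L)].  With a single
   guess the a_i(L) sum to at most 1, so this is at most (1/k) E [max_i r (L ! i)], with equality
   for the attacker that guesses a position of maximal ratio.  Finally, the maximum of k
   independent copies of r under Q takes the value x with probability G(x)^k - G(x^-)^k. *)

definition likelihood_ratio :: "'a pmf \<Rightarrow> 'a pmf \<Rightarrow> 'a \<Rightarrow> real" where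
  "likelihood_ratio P Q x = pmf P x / pmf Q x"

lemma nn_integral_likelihood_ratio:
  assumes "set_pmf P \<subseteq> set_pmf Q"
  shows "(\<integral>\<^sup>+x. ennreal (likelihood_ratio P Q x) * f x \<partial>Q) = (\<integral>\<^sup>+x. f x \<partial>P)"
proof -
  have "ennreal (pmf Q x) * (ennreal (likelihood_ratio P Q x) * f x) = ennreal (pmf P x) * f x"
    for x
  proof (cases "pmf Q x = 0")
    case True
    then have "pmf P x = 0" using assms by (auto simp: set_pmf_iff)
    with True show ?thesis by simp
  next
    case False
    then have "ennreal (pmf Q x) * ennreal (likelihood_ratio P Q x) = ennreal (pmf P x)"
      by (simp add: likelihood_ratio_def flip: ennreal_mult)
    then show ?thesis by (metis mult.assoc)
  qed
  then show ?thesis by (simp add: nn_integral_measure_pmf)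
qed

lemma nn_integral_Cons_likelihood_ratio:
  assumes "set_pmf P \<subseteq> set_pmf Q"
  shows "(\<integral>\<^sup>+x. \<integral>\<^sup>+xs. f (x # xs) \<partial>replicate_pmf n Q \<partial>P) =
    (\<integral>\<^sup>+xs. ennreal (likelihood_ratio P Q (hd xs)) * f xs \<partial>replicate_pmf (Suc n) Q)"
  by (simp add: nn_integral_cmult nn_integral_likelihood_ratio[OF assms])

lemma replicate_pmf_Suc_conv_pair_pmf:
  "replicate_pmf (Suc n) Q = map_pmf (\<lambda>(x, xs). x # xs) (pair_pmf Q (replicate_pmf n Q))"
  by (simp add: map_pmf_def pair_pmf_def bind_assoc_pmf bind_return_pmf)

lemma pmf_replicate_pmf:
  "pmf (replicate_pmf n Q) xs = (if length xs = n then prod_list (map (pmf Q) xs) else 0)"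
proof (induction n arbitrary: xs)
  case 0
  then show ?case by (cases xs) auto
next
  case (Suc n)
  have inj: "inj (\<lambda>(x, xs). x # xs)" by (auto simp: inj_def)
  show ?case
  proof (cases xs)
    case Nil
    then show ?thesis
      unfolding replicate_pmf_Suc_conv_pair_pmf by (subst pmf_map_outside) auto
  next
    case (Cons y ys)
    have "pmf (replicate_pmf (Suc n) Q) xs = pmf (pair_pmf Q (replicate_pmf n Q)) (y, ys)"
      unfolding replicate_pmf_Suc_conv_pair_pmf Cons
      using pmf_map_inj'[OF inj, of _ "(y, ys)"] by simp
    then show ?thesis using Suc.IH Cons by (simp add: pmf_pair)
  qed
qed

lemma prob_replicate_pmf_lists:
  "measure_pmf.prob (replicate_pmf n Q) (lists B) = measure_pmf.prob Q B ^ n"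
proof -
  have "emeasure (replicate_pmf n Q) (lists B) = emeasure Q B ^ n"
  proof (induction n)
    case (Suc n)
    let ?R = "replicate_pmf n Q"
    have "indicator (lists B) (x # xs) = indicator B x * (indicator (lists B) xs :: ennreal)" for x xs
      by (simp add: indicator_def)
    then have "emeasure (replicate_pmf (Suc n) Q) (lists B) =
        (\<integral>\<^sup>+x. indicator B x * emeasure ?R (lists B) \<partial>Q)"
      by (simp add: nn_integral_cmult)
    also have "\<dots> = emeasure Q B ^ Suc n"
      using Suc.IH by (simp add: nn_integral_multc mult.commute)
    finally show ?case .
  qed simp
  then show ?thesis
    by (simp add: measure_pmf.emeasure_eq_measure ennreal_power)
qed

lemma pmf_Max_replicate_pmf:
  fixes f :: "'a \<Rightarrow> 'b::linorder"
  assumes "n > 0"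
  shows "pmf (map_pmf (\<lambda>xs. Max (f ` set xs)) (replicate_pmf n Q)) x =
    measure_pmf.prob Q {y. f y \<le> x} ^ n - measure_pmf.prob Q {y. f y < x} ^ n"
proof -
  let ?R = "replicate_pmf n Q"
  let ?M = "\<lambda>xs. Max (f ` set xs)"
  have prob_Max_in: "measure_pmf.prob ?R {xs. ?M xs \<in> S} = measure_pmf.prob Q {y. f y \<in> S} ^ n"
    if S: "\<And>X. finite X \<Longrightarrow> X \<noteq> {} \<Longrightarrow> Max X \<in> S \<longleftrightarrow> X \<subseteq> S" for S
  proof -
    have "?M xs \<in> S \<longleftrightarrow> xs \<in> lists {y. f y \<in> S}" if "xs \<in> set_pmf ?R" for xs
    proof -
      have "xs \<noteq> []" using that assms by (auto simp: set_replicate_pmf)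
      then show ?thesis using S[of "f ` set xs"] by auto
    qed
    then have "{xs. ?M xs \<in> S} \<inter> set_pmf ?R = lists {y. f y \<in> S} \<inter> set_pmf ?R"
      by blast
    then show ?thesis
      by (metis measure_Int_set_pmf prob_replicate_pmf_lists)
  qed
  have "?M -` {x} = {xs. ?M xs \<in> {..x}} - {xs. ?M xs \<in> {..<x}}"
    by auto
  then have "pmf (map_pmf ?M ?R) x =
      measure_pmf.prob ?R {xs. ?M xs \<in> {..x}} - measure_pmf.prob ?R {xs. ?M xs \<in> {..<x}}"
    unfolding pmf_map by (simp only:) (rule measure_pmf.finite_measure_Diff; auto)
  also have "\<dots> = measure_pmf.prob Q {y. f y \<le> x} ^ n - measure_pmf.prob Q {y. f y < x} ^ n"
    by (subst (1 2) prob_Max_in) (auto simp: Max_le_iff Max_less_iff subset_eq)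
  finally show ?thesis .
qed

lemma map_pmf_permute_list_replicate_pmf:
  assumes \<sigma>: "\<sigma> permutes {..<n}"
  shows "map_pmf (permute_list \<sigma>) (replicate_pmf n Q) = replicate_pmf n Q"
proof (rule pmf_eqI)
  fix ys :: "'a list"
  let ?R = "replicate_pmf n Q"
  have R_len: "set_pmf ?R \<subseteq> {xs. length xs = n}" by (auto simp: set_replicate_pmf)
  have "pmf (map_pmf (permute_list \<sigma>) ?R) ys = measure ?R (permute_list \<sigma> -` {ys} \<inter> set_pmf ?R)"
    by (simp add: pmf_map measure_Int_set_pmf)
  also have "permute_list \<sigma> -` {ys} \<inter> set_pmf ?R =
      (if length ys = n then {permute_list (inv \<sigma>) ys} \<inter> set_pmf ?R else {})"
  proof -
    have "permute_list (inv \<sigma>) (permute_list \<sigma> xs) = xs" if "length xs = n" for xs :: "'a list"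
      using permute_list_compose[of "inv \<sigma>" xs \<sigma>] permutes_inv[OF \<sigma>] \<sigma> that
      by (simp add: permutes_inv_o)
    moreover have "permute_list \<sigma> (permute_list (inv \<sigma>) xs) = xs" if "length xs = n" for xs :: "'a list"
      using permute_list_compose[of \<sigma> xs "inv \<sigma>"] \<sigma> that by (simp add: permutes_inv_o)
    ultimately have "permute_list \<sigma> xs = ys \<longleftrightarrow> xs = permute_list (inv \<sigma>) ys"
      if "length xs = n" "length ys = n" for xs
      using that by metis
    then show ?thesis using R_len by auto
  qed
  also have "measure ?R \<dots> = pmf ?R ys"
    using \<sigma> by (simp add: measure_Int_set_pmf measure_pmf_single pmf_replicate_pmf
        prod_mset_prod_list[symmetric] permutes_inv)
  finally show "pmf (map_pmf (permute_list \<sigma>) ?R) ys = pmf ?R ys" .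
qed

(* Composing on the right with the transposition of a and b preserves the uniform
   distribution on permutations and exchanges a and b. *)
lemma pmf_map_inv_apply_pmf_of_set_permutes_eq:
  assumes A: "finite A" "a \<in> A" "b \<in> A"
  defines "D \<equiv> map_pmf (\<lambda>\<sigma>. inv \<sigma> a) (pmf_of_set {\<sigma>. \<sigma> permutes A})"
  shows "pmf D b = pmf D a"
proof -
  define Perms where "Perms = {\<sigma>. \<sigma> permutes A}"
  define \<tau> where "\<tau> = Transposition.transpose a b"
  have Perms: "finite Perms" "Perms \<noteq> {}"
    using A(1) by (auto simp: Perms_def finite_permutations intro: permutes_id)
  have \<tau>: "\<tau> permutes A" using A by (simp add: \<tau>_def permutes_swap_id)
  have "bij_betw (\<lambda>\<sigma>. \<sigma> \<circ> \<tau>) Perms Perms"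
    by (rule bij_betw_byWitness[where f' = "\<lambda>\<sigma>. \<sigma> \<circ> \<tau>"])
      (auto simp: Perms_def \<tau>_def comp_assoc intro: permutes_compose[OF \<tau>[unfolded \<tau>_def]])
  then have shift: "map_pmf (\<lambda>\<sigma>. \<sigma> \<circ> \<tau>) (pmf_of_set Perms) = pmf_of_set Perms"
    using Perms(2,1) by (rule map_pmf_of_set_bij_betw)
  have "map_pmf \<tau> D = map_pmf (\<lambda>\<sigma>. inv (\<sigma> \<circ> \<tau>) a) (pmf_of_set Perms)"
    unfolding D_def Perms_def[symmetric] map_pmf_comp using Perms \<tau>
    by (intro map_pmf_cong) (auto simp: Perms_def o_inv_distrib permutes_bij \<tau>_def)
  also have "\<dots> = D"
    unfolding D_def Perms_def[symmetric] by (subst (2) shift[symmetric]) (simp add: map_pmf_comp)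
  finally have "map_pmf \<tau> D = D" .
  then have "pmf D (\<tau> a) = pmf D a"
    by (metis pmf_map_inj' \<tau> permutes_inj)
  then show ?thesis by (simp add: \<tau>_def)
qed

lemma map_pmf_inv_apply_pmf_of_set_permutes:
  assumes A: "finite A" "a \<in> A"
  shows "map_pmf (\<lambda>\<sigma>. inv \<sigma> a) (pmf_of_set {\<sigma>. \<sigma> permutes A}) = pmf_of_set A"
proof -
  define D where "D = map_pmf (\<lambda>\<sigma>. inv \<sigma> a) (pmf_of_set {\<sigma>. \<sigma> permutes A})"
  have D_swap: "pmf D b = pmf D a" if "b \<in> A" for b
    unfolding D_def using A that by (rule pmf_map_inv_apply_pmf_of_set_permutes_eq)
  have "finite {\<sigma>. \<sigma> permutes A}" "{\<sigma>. \<sigma> permutes A} \<noteq> {}"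
    using A(1) by (auto simp: finite_permutations intro: permutes_id)
  then have D_supp: "set_pmf D \<subseteq> A"
    using A by (auto simp: D_def permutes_inv permutes_in_image)
  have "(\<Sum>b\<in>A. pmf D b) = (\<Sum>b\<in>A. pmf D a)"
    by (rule sum.cong[OF refl D_swap])
  with sum_pmf_eq_1[OF A(1) D_supp] have "card A * pmf D a = 1" by simp
  moreover have "card A > 0" using A by (auto simp: card_gt_0_iff)
  ultimately have Da: "pmf D a = 1 / card A" by (simp add: field_simps)
  have "pmf D b = pmf (pmf_of_set A) b" for b
  proof (cases "b \<in> A")
    case True
    then show ?thesis using A Da D_swap[OF True] by (subst pmf_of_set) auto
  next
    case False
    then show ?thesis using A D_supp by (subst pmf_of_set) (auto simp: pmf_eq_0_set_pmf)
  qed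
  then show ?thesis unfolding D_def by (rule pmf_eqI)
qed

lemma nn_integral_real_pmf_eq_infsum:
  fixes M :: "real pmf"
  assumes "set_pmf M \<subseteq> S" "\<And>x. x \<in> S \<Longrightarrow> 0 \<le> x" "(\<integral>\<^sup>+x. ennreal x \<partial>M) \<noteq> \<infinity>"
  shows "(\<integral>\<^sup>+x. ennreal x \<partial>M) = ennreal (\<Sum>\<^sub>\<infinity>x\<in>S. x * pmf M x)"
proof -
  have eq: "(\<integral>\<^sup>+x. ennreal x \<partial>M) = (\<integral>\<^sup>+x. ennreal (x * pmf M x) \<partial>count_space S)"
  proof -
    have "(\<integral>\<^sup>+x. ennreal x \<partial>M) = (\<integral>\<^sup>+x. ennreal (x * pmf M x) * indicator S x \<partial>count_space UNIV)"
      unfolding nn_integral_measure_pmf using assms(1,2)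
      by (intro nn_integral_cong)
         (auto simp: ennreal_mult' mult.commute indicator_def set_pmf_iff subset_iff)
    then show ?thesis
      by (simp add: nn_integral_count_space_indicator)
  qed
  have integrable: "integrable (count_space S) (\<lambda>x. x * pmf M x)"
    using assms(2,3) eq
    by (intro integrableI_nonneg) (auto simp: AE_count_space top.not_eq_extremum)
  show ?thesis
    unfolding eq using integrable assms(2)
    by (simp add: nn_integral_conv_infsetsum infsetsum_infsum abs_summable_on_def)
qed

definition guess_prob :: "('a list \<Rightarrow> nat list pmf) \<Rightarrow> 'a list \<Rightarrow> nat \<Rightarrow> real" where
  "guess_prob A L i = measure_pmf.prob (A L) {g. i \<in> set g}"

lemma guess_prob_single_guess:
  assumes "valid_attacker 1 A"
  shows "guess_prob A L i = pmf (A L) [i]"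
proof -
  have "i \<in> set g \<longleftrightarrow> g = [i]" if g: "g \<in> set_pmf (A L)" for g
  proof -
    obtain j where "g = [j]"
      using assms g by (fastforce simp: valid_attacker_def length_Suc_conv)
    then show ?thesis by auto
  qed
  then have "{g. i \<in> set g} \<inter> set_pmf (A L) = {[i]} \<inter> set_pmf (A L)"
    by blast
  then show ?thesis
    by (metis guess_prob_def measure_Int_set_pmf measure_pmf_single)
qed

lemma sum_guess_prob_le_1:
  assumes "valid_attacker 1 A" "finite I"
  shows "(\<Sum>i\<in>I. guess_prob A L i) \<le> 1"
proof -
  have "(\<Sum>i\<in>I. guess_prob A L i) = (\<Sum>g\<in>(\<lambda>i. [i]) ` I. pmf (A L) g)"
    by (subst sum.reindex) (auto simp: inj_on_def guess_prob_single_guess[OF assms(1)])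
  also have "\<dots> = measure_pmf.prob (A L) ((\<lambda>i. [i]) ` I)"
    using assms(2) by (simp add: measure_measure_pmf_finite)
  finally show ?thesis by simp
qed

lemma weighted_sum_guess_prob_le:
  assumes "valid_attacker 1 A" "finite I" "\<And>i. i \<in> I \<Longrightarrow> w i \<le> m" "0 \<le> m"
  shows "(\<Sum>i\<in>I. w i * guess_prob A L i) \<le> m"
proof -
  have "(\<Sum>i\<in>I. w i * guess_prob A L i) \<le> (\<Sum>i\<in>I. m * guess_prob A L i)"
    using assms(3) by (intro sum_mono mult_right_mono) (simp_all add: guess_prob_def)
  also have "\<dots> \<le> m"
    using mult_left_mono[OF sum_guess_prob_le_1[OF assms(1,2)] assms(4)]
    by (simp add: sum_distrib_left)
  finally show ?thesis .
qed

definition best_guess :: "('a \<Rightarrow> real) \<Rightarrow> 'a list \<Rightarrow> nat" where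
  "best_guess f L = arg_max (\<lambda>i. f (L ! i)) (\<lambda>i. i < length L)"

lemma best_guess_Max:
  assumes "L \<noteq> []"
  shows "best_guess f L < length L \<and> f (L ! best_guess f L) = Max (f ` set L)"
proof -
  have "Max (f ` set L) \<in> f ` set L" using assms by (intro Max_in) auto
  then obtain i where i: "i < length L" "f (L ! i) = Max (f ` set L)"
    by (metis imageE in_set_conv_nth)
  have "is_arg_max (\<lambda>j. f (L ! j)) (\<lambda>j. j < length L) i"
    unfolding is_arg_max_linorder i(2) using i(1) by (auto intro: Max_ge)
  then have "is_arg_max (\<lambda>j. f (L ! j)) (\<lambda>j. j < length L) (best_guess f L)"
    unfolding best_guess_def arg_max_def by (rule someI)
  then show ?thesis
    unfolding is_arg_max_linorder using i by (auto intro!: antisym Max_ge)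
qed

definition best_guess_attacker :: "('a \<Rightarrow> real) \<Rightarrow> 'a list \<Rightarrow> nat list pmf" where
  "best_guess_attacker f L = return_pmf [best_guess f L]"

lemma valid_best_guess_attacker: "valid_attacker 1 (best_guess_attacker f)"
  by (simp add: valid_attacker_def best_guess_attacker_def)

lemma weighted_sum_guess_prob_best_guess_attacker:
  assumes "L \<noteq> []"
  shows "(\<Sum>i<length L. f (L ! i) * guess_prob (best_guess_attacker f) L i) = Max (f ` set L)"
  using best_guess_Max[OF assms, of f]
  by (simp add: guess_prob_def best_guess_attacker_def indicator_def)

lemma ennreal_pmf_FlatGame_conv_nn_integral:
  "ennreal (pmf (FlatGame P Q k A) True) =
    (\<integral>\<^sup>+\<sigma>. \<integral>\<^sup>+pw. \<integral>\<^sup>+hs. ennreal (guess_prob A (map (\<lambda>j. (pw # hs) ! \<sigma> j) [0..<k]) (inv \<sigma> 0))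
      \<partial>replicate_pmf (k - 1) Q \<partial>P \<partial>pmf_of_set {\<sigma>. \<sigma> permutes {..<k}})"
proof -
  let ?U = "pmf_of_set {\<sigma>. \<sigma> permutes {..<k}}"
  let ?R = "replicate_pmf (k - 1) Q"
  let ?win = "\<lambda>\<sigma> pw hs. map_pmf (\<lambda>g. inv \<sigma> 0 \<in> set g) (A (map (\<lambda>j. (pw # hs) ! \<sigma> j) [0..<k]))"
  have "?U \<bind> (\<lambda>\<sigma>. P \<bind> (\<lambda>pw. ?R \<bind> (\<lambda>hs. ?win \<sigma> pw hs))) =
      P \<bind> (\<lambda>pw. ?U \<bind> (\<lambda>\<sigma>. ?R \<bind> (\<lambda>hs. ?win \<sigma> pw hs)))"
    by (rule bind_commute_pmf)
  also have "\<dots> = P \<bind> (\<lambda>pw. ?R \<bind> (\<lambda>hs. ?U \<bind> (\<lambda>\<sigma>. ?win \<sigma> pw hs)))"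
    by (intro bind_pmf_cong refl bind_commute_pmf)
  also have "\<dots> = FlatGame P Q k A"
    by (simp add: FlatGame_def map_pmf_def)
  finally have "FlatGame P Q k A = ?U \<bind> (\<lambda>\<sigma>. P \<bind> (\<lambda>pw. ?R \<bind> (\<lambda>hs. ?win \<sigma> pw hs)))" ..
  then show ?thesis
    by (simp add: ennreal_pmf_bind pmf_map guess_prob_def vimage_def)
qed

lemma nn_integral_shuffle_likelihood_ratio:
  assumes PQ: "set_pmf P \<subseteq> set_pmf Q" and \<sigma>: "\<sigma> permutes {..<k}" and k: "k > 0"
  shows "(\<integral>\<^sup>+pw. \<integral>\<^sup>+hs. g (map (\<lambda>j. (pw # hs) ! \<sigma> j) [0..<k]) \<partial>replicate_pmf (k - 1) Q \<partial>P) =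
    (\<integral>\<^sup>+L. ennreal (likelihood_ratio P Q (L ! inv \<sigma> 0)) * g L \<partial>replicate_pmf k Q)"
proof -
  let ?R = "replicate_pmf k Q"
  let ?r = "likelihood_ratio P Q"
  have inv0: "inv \<sigma> 0 < k" "\<sigma> (inv \<sigma> 0) = 0"
    using k permutes_in_image[OF permutes_inv[OF \<sigma>], of 0] permutes_inverses(1)[OF \<sigma>] by auto
  have "(\<integral>\<^sup>+pw. \<integral>\<^sup>+hs. g (map (\<lambda>j. (pw # hs) ! \<sigma> j) [0..<k]) \<partial>replicate_pmf (k - 1) Q \<partial>P) =
      (\<integral>\<^sup>+pw. \<integral>\<^sup>+hs. g (permute_list \<sigma> (pw # hs)) \<partial>replicate_pmf (k - 1) Q \<partial>P)"
    using k by (intro nn_integral_cong nn_integral_cong_AE AE_pmfI)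
      (auto simp: permute_list_def set_replicate_pmf)
  also have "\<dots> = (\<integral>\<^sup>+xs. ennreal (?r (hd xs)) * g (permute_list \<sigma> xs) \<partial>?R)"
    using nn_integral_Cons_likelihood_ratio[OF PQ,
        where f = "\<lambda>xs. g (permute_list \<sigma> xs)" and n = "k - 1"] k
    by simp
  also have "\<dots> = (\<integral>\<^sup>+xs. ennreal (?r (permute_list \<sigma> xs ! inv \<sigma> 0)) * g (permute_list \<sigma> xs) \<partial>?R)"
  proof (intro nn_integral_cong_AE AE_pmfI)
    fix xs assume "xs \<in> set_pmf ?R"
    then have "length xs = k" by (simp add: set_replicate_pmf)
    then have "permute_list \<sigma> xs ! inv \<sigma> 0 = hd xs"
      using \<sigma> inv0 k
      by (simp add: permute_list_nth hd_conv_nth[of xs] length_greater_0_conv[symmetric])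
    then show "ennreal (?r (hd xs)) * g (permute_list \<sigma> xs) =
        ennreal (?r (permute_list \<sigma> xs ! inv \<sigma> 0)) * g (permute_list \<sigma> xs)"
      by simp
  qed
  also have "\<dots> = (\<integral>\<^sup>+L. ennreal (?r (L ! inv \<sigma> 0)) * g L \<partial>map_pmf (permute_list \<sigma>) ?R)"
    by simp
  finally show ?thesis
    unfolding map_pmf_permute_list_replicate_pmf[OF \<sigma>] .
qed

lemma ennreal_pmf_FlatGame_eq_weighted_guess_prob:
  assumes PQ: "set_pmf P \<subseteq> set_pmf Q" and k: "k > 0"
  shows "ennreal (pmf (FlatGame P Q k A) True) =
    (\<integral>\<^sup>+L. ennreal (\<Sum>i<k. likelihood_ratio P Q (L ! i) * guess_prob A L i) \<partial>replicate_pmf k Q) / k"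
proof -
  let ?U = "pmf_of_set {\<sigma>. \<sigma> permutes {..<k}}"
  define H where
    "H i = (\<integral>\<^sup>+L. ennreal (likelihood_ratio P Q (L ! i) * guess_prob A L i) \<partial>replicate_pmf k Q)" for i
  have perms: "finite {\<sigma>. \<sigma> permutes {..<k}}" "{\<sigma>. \<sigma> permutes {..<k}} \<noteq> {}"
    by (auto simp: finite_permutations intro: permutes_id)
  have r_nonneg: "likelihood_ratio P Q x \<ge> 0" for x
    by (simp add: likelihood_ratio_def)
  have "(\<integral>\<^sup>+pw. \<integral>\<^sup>+hs. ennreal (guess_prob A (map (\<lambda>j. (pw # hs) ! \<sigma> j) [0..<k]) (inv \<sigma> 0))
      \<partial>replicate_pmf (k - 1) Q \<partial>P) = H (inv \<sigma> 0)" if \<sigma>: "\<sigma> permutes {..<k}" for \<sigma>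
    using nn_integral_shuffle_likelihood_ratio[OF PQ \<sigma> k,
        where g = "\<lambda>L. ennreal (guess_prob A L (inv \<sigma> 0))"] r_nonneg
    by (simp add: H_def ennreal_mult')
  then have "ennreal (pmf (FlatGame P Q k A) True) = (\<integral>\<^sup>+\<sigma>. H (inv \<sigma> 0) \<partial>?U)"
    unfolding ennreal_pmf_FlatGame_conv_nn_integral
    by (intro nn_integral_cong_AE AE_pmfI) (use perms in simp)
  also have "\<dots> = (\<integral>\<^sup>+i. H i \<partial>map_pmf (\<lambda>\<sigma>. inv \<sigma> 0) ?U)"
    by simp
  also have "\<dots> = (\<integral>\<^sup>+i. H i \<partial>pmf_of_set {..<k})"
    using k by (subst map_pmf_inv_apply_pmf_of_set_permutes) auto
  also have "\<dots> = (\<Sum>i<k. H i) / k"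
    using k by (subst nn_integral_pmf_of_set) auto
  also have "(\<Sum>i<k. H i) =
      (\<integral>\<^sup>+L. ennreal (\<Sum>i<k. likelihood_ratio P Q (L ! i) * guess_prob A L i) \<partial>replicate_pmf k Q)"
    unfolding H_def using r_nonneg
    by (subst nn_integral_sum[symmetric]) (auto simp: sum_ennreal guess_prob_def)
  finally show ?thesis .
qed

lemma ennreal_pmf_FlatGame_single_guess_le:
  assumes PQ: "set_pmf P \<subseteq> set_pmf Q" and k: "k > 0"
    and A: "valid_attacker 1 A"
  shows "ennreal (pmf (FlatGame P Q k A) True) \<le>
    (\<integral>\<^sup>+L. ennreal (Max (likelihood_ratio P Q ` set L)) \<partial>replicate_pmf k Q) / k"
proof -
  have "(\<Sum>i<k. likelihood_ratio P Q (L ! i) * guess_prob A L i) \<le> Max (likelihood_ratio P Q ` set L)"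
    if "L \<in> set_pmf (replicate_pmf k Q)" for L
  proof -
    have L: "length L = k" using that by (simp add: set_replicate_pmf)
    have "likelihood_ratio P Q (L ! i) \<le> Max (likelihood_ratio P Q ` set L)" if "i < k" for i
      using that L by (intro Max_ge) auto
    moreover have "0 \<le> likelihood_ratio P Q (L ! 0)"
      by (simp add: likelihood_ratio_def)
    ultimately show ?thesis
      using k by (intro weighted_sum_guess_prob_le[OF A]) (auto intro: order_trans)
  qed
  then show ?thesis
    unfolding ennreal_pmf_FlatGame_eq_weighted_guess_prob[OF PQ k]
    by (intro divide_right_mono_ennreal nn_integral_mono_AE AE_pmfI ennreal_leI)
qed

lemma ennreal_pmf_FlatGame_best_guess_attacker:
  assumes PQ: "set_pmf P \<subseteq> set_pmf Q" and k: "k > 0"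
  shows "ennreal (pmf (FlatGame P Q k (best_guess_attacker (likelihood_ratio P Q))) True) =
    (\<integral>\<^sup>+L. ennreal (Max (likelihood_ratio P Q ` set L)) \<partial>replicate_pmf k Q) / k"
proof -
  have "(\<Sum>i<k. likelihood_ratio P Q (L ! i) *
      guess_prob (best_guess_attacker (likelihood_ratio P Q)) L i) = Max (likelihood_ratio P Q ` set L)"
    if "L \<in> set_pmf (replicate_pmf k Q)" for L
  proof -
    have "length L = k" using that by (simp add: set_replicate_pmf)
    then show ?thesis
      using k weighted_sum_guess_prob_best_guess_attacker[of L] by auto
  qed
  then show ?thesis
    unfolding ennreal_pmf_FlatGame_eq_weighted_guess_prob[OF PQ k]
    by (intro arg_cong2[where f = "(/)"] nn_integral_cong_AE AE_pmfI refl) simp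
qed

lemma flatness_1_eq_best_guess_attacker:
  assumes PQ: "set_pmf P \<subseteq> set_pmf Q" and k: "k > 0"
  shows "flatness P Q k 1 = pmf (FlatGame P Q k (best_guess_attacker (likelihood_ratio P Q))) True"
  unfolding flatness_def
proof (rule cSup_eq_maximum)
  let ?win = "\<lambda>A. pmf (FlatGame P Q k A) True"
  show "?win (best_guess_attacker (likelihood_ratio P Q)) \<in> ?win ` {A. valid_attacker 1 A}"
    using valid_best_guess_attacker by blast
  fix x assume "x \<in> ?win ` {A. valid_attacker 1 A}"
  then obtain A where A: "valid_attacker 1 A" and x: "x = ?win A" by blast
  have "ennreal (?win A) \<le> ennreal (?win (best_guess_attacker (likelihood_ratio P Q)))"
    unfolding ennreal_pmf_FlatGame_best_guess_attacker[OF PQ k]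
    by (rule ennreal_pmf_FlatGame_single_guess_le[OF PQ k A])
  then show "x \<le> ?win (best_guess_attacker (likelihood_ratio P Q))"
    unfolding x by (simp add: ennreal_le_iff)
qed

lemma set_pmf_Max_likelihood_ratio_subset:
  assumes "k > 0"
  shows "set_pmf (map_pmf (\<lambda>L. Max (likelihood_ratio P Q ` set L)) (replicate_pmf k Q)) \<subseteq>
    {pmf P pw / pmf Q pw | pw. pmf Q pw > 0}"
proof
  fix x assume "x \<in> set_pmf (map_pmf (\<lambda>L. Max (likelihood_ratio P Q ` set L)) (replicate_pmf k Q))"
  then obtain L where L: "L \<in> set_pmf (replicate_pmf k Q)"
    and x: "x = Max (likelihood_ratio P Q ` set L)"
    by auto
  have "L \<noteq> []" "set L \<subseteq> set_pmf Q"
    using L assms by (auto simp: set_replicate_pmf)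
  moreover have "x \<in> likelihood_ratio P Q ` set L"
    unfolding x using \<open>L \<noteq> []\<close> by (intro Max_in) auto
  ultimately obtain pw where "pw \<in> set_pmf Q" "x = likelihood_ratio P Q pw"
    by auto
  then show "x \<in> {pmf P pw / pmf Q pw | pw. pmf Q pw > 0}"
    by (auto simp: likelihood_ratio_def set_pmf_eq')
qed

lemma flatness_1_eq_infsum:
  assumes PQ: "set_pmf P \<subseteq> set_pmf Q" and k: "k > 0"
  shows "flatness P Q k 1 = (\<Sum>\<^sub>\<infinity>x\<in>{pmf P pw / pmf Q pw | pw. pmf Q pw > 0}.
    x * pmf (map_pmf (\<lambda>L. Max (likelihood_ratio P Q ` set L)) (replicate_pmf k Q)) x) / k"
proof -
  let ?S = "{pmf P pw / pmf Q pw | pw. pmf Q pw > 0}"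
  let ?M = "map_pmf (\<lambda>L. Max (likelihood_ratio P Q ` set L)) (replicate_pmf k Q)"
  let ?E = "\<integral>\<^sup>+L. ennreal (Max (likelihood_ratio P Q ` set L)) \<partial>replicate_pmf k Q"
  define T where "T = (\<Sum>\<^sub>\<infinity>x\<in>?S. x * pmf ?M x)"
  have M_support: "set_pmf ?M \<subseteq> ?S"
    using k by (rule set_pmf_Max_likelihood_ratio_subset)
  have flat_nonneg: "flatness P Q k 1 \<ge> 0"
    unfolding flatness_1_eq_best_guess_attacker[OF PQ k] by simp
  have flat: "ennreal (flatness P Q k 1) = ?E / k"
    using ennreal_pmf_FlatGame_best_guess_attacker[OF PQ k]
      flatness_1_eq_best_guess_attacker[OF PQ k]
    by simp
  then have E_finite: "?E \<noteq> \<infinity>"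
    by (auto simp: ennreal_top_divide)
  have T_nonneg: "T \<ge> 0"
    unfolding T_def using M_support by (intro infsum_nonneg) auto
  have "?E = (\<integral>\<^sup>+x. ennreal x \<partial>?M)" by simp
  also have "\<dots> = ennreal T"
    unfolding T_def using M_support E_finite by (intro nn_integral_real_pmf_eq_infsum) auto
  finally have "ennreal (flatness P Q k 1) = ennreal (T / k)"
    unfolding flat using k T_nonneg by (simp add: divide_ennreal ennreal_of_nat_eq_real_of_nat)
  then show ?thesis
    using flat_nonneg T_nonneg by (simp add: ennreal_inj T_def)
qed

theorem theorem3:
  fixes P Q :: "'a::countable pmf" and k :: nat
  assumes "\<And>pw. pmf P pw > 0 \<Longrightarrow> pmf Q pw > 0"
    and "k \<ge> 2"
  shows "flatness P Q k 1 =
    (\<Sum>\<^sub>\<infinity> x \<in> {pmf P pw / pmf Q pw | pw. pmf Q pw > 0}.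
        1 / real k * x * (G_le P Q x ^ k - G_less P Q x ^ k))"
proof -
  let ?M = "map_pmf (\<lambda>L. Max (likelihood_ratio P Q ` set L)) (replicate_pmf k Q)"
  have PQ: "set_pmf P \<subseteq> set_pmf Q" and k: "k > 0"
    using assms by (auto simp: set_pmf_eq')
  have "flatness P Q k 1 =
      (\<Sum>\<^sub>\<infinity>x\<in>{pmf P pw / pmf Q pw | pw. pmf Q pw > 0}. 1 / real k * (x * pmf ?M x))"
    unfolding flatness_1_eq_infsum[OF PQ k] infsum_cmult_right' by simp
  also have "\<dots> = (\<Sum>\<^sub>\<infinity>x\<in>{pmf P pw / pmf Q pw | pw. pmf Q pw > 0}.
      1 / real k * x * (G_le P Q x ^ k - G_less P Q x ^ k))"
    using k by (simp add: pmf_Max_replicate_pmf G_le_def G_less_def likelihood_ratio_def mult.assoc)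
  finally show ?thesis .
qed

end
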